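(* Let $L>0$, $M\ge1$, $\Delta x=\Delta y=L/M$, and Cartesian cells with centers $(x_j,y_k)=(j\Delta x,k\Delta y)$, $j,k\in\{-M,\dots,M\}$. Let $H\in C^1([0,\infty))$, $V:\mathbb{R}^2\to\mathbb{R}$, and $(W_{p,q})_{p,q=-2M}^{2M}$ real numbers with $W_{-p,-q}=W_{p,q}$. Let $t\mapsto(\overline\rho_{j,k}(t))$ be a differentiable solution on $(0,\infty)$, with $\overline\rho_{j,k}(t)\ge0$, of \[ \frac{d\overline\rho_{j,k}}{dt}=-\frac{F^x_{j+\frac12,k}-F^x_{j-\frac12,k}}{\Delta x}-\frac{F^y_{j,k+\frac12}-F^y_{j,k-\frac12}}{\Delta y},\qquad j,k\in\{-M,\dots,M\}, \] where at each time: slopes are chosen so that the point values $\rho^{\rm E}_{j,k}=\overline\rho_{j,k}+\frac{\Delta x}{2}(\rho_x)_{j,k}$, $\rho^{\rm W}_{j,k}=\overline\rho_{j,k}-\frac{\Delta x}{2}(\rho_x)_{j,k}$, $\rho^{\rm N}_{j,k}=\overline\rho_{j,k}+\frac{\Delta y}{2}(\rho_y)_{j,k}$, $\rho^{\rm S}_{j,k}=\overline\rho_{j,k}-\frac{\Delta y}{2}(\rho_y)_{j,k}$ are nonnegative; $\xi_{j,k}=\Delta x\Delta y\sum_{i,l}W_{j-i,k-l}\overline\rho_{i,l}+H'(\overline\rho_{j,k})+V(x_j,y_k)$; $u_{j+\frac12,k}=-\frac{\xi_{j+1,k}-\xi_{j,k}}{\Delta x}$, $v_{j,k+\frac12}=-\frac{\xi_{j,k+1}-\xi_{j,k}}{\Delta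 y}$ with $u^\pm,v^\pm$ their positive/negative parts ($\max(\cdot,0)$, $\min(\cdot,0)$); $F^x_{j+\frac12,k}=u^+_{j+\frac12,k}\rho^{\rm E}_{j,k}+u^-_{j+\frac12,k}\rho^{\rm W}_{j+1,k}$, $F^y_{j,k+\frac12}=v^+_{j,k+\frac12}\rho^{\rm N}_{j,k}+v^-_{j,k+\frac12}\rho^{\rm S}_{j,k+1}$ at interior interfaces; and the discrete no-flux conditions $F^x_{M+\frac12,k}=F^x_{-M-\frac12,k}=F^y_{j,M+\frac12}=F^y_{j,-M-\frac12}=0$ hold. Define \[ E_\Delta(t)=\Delta x\Delta y\sum_{j,k}\Big[\tfrac12\Delta x\Delta y\sum_{i,l}W_{j-i,k-l}\overline\rho_{i,l}\overline\rho_{j,k}+H(\overline\rho_{j,k})+V(x_j,y_k)\overline\rho_{j,k}\Big], \] \[ I_\Delta(t)=\Delta x\Delta y\sum_{j=-M}^{M-1}\sum_{k=-M}^{M-1}\Big[(u_{j+\frac12,k})^2+(v_{j,k+\frac12})^2\Big]\min\big(\rho^{\rm E}_{j,k},\rho^{\rm W}_{j+1,k},\rho^{\rm N}_{j,k},\rho^{\rm S}_{j,k+1}\big). \] Then $\frac{d}{dt}E_\Delta(t)\le-I_\Delta(t)$ for all $t>0$.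
   Context: This is the two-dimensional semi-discrete finite-volume scheme with no-flux boundary conditions on $[-L,L]^2$ for $\rho_t=\nabla\cdot[\rho\nabla(H'(\rho)+V(\mathbf{x})+W*\rho)]$ with symmetric interaction potential $W$ (so $W_{p,q}\approx W(p\Delta x,q\Delta y)$ is symmetric) and $\rho_0\ge0$; $E_\Delta$ is the discrete free energy. *)

theory Defs
  imports "HOL-Analysis.Analysis"
begin

text \<open>Interface quantities at (j+1/2,k) are indexed by (j,k), at (j,k+1/2) by (j,k).\<close>

definition idx :: "nat \<Rightarrow> int set" where
  "idx M = {- int M .. int M}"

definition mesh :: "real \<Rightarrow> nat \<Rightarrow> real" where
  "mesh L M = L / real M"

definition xi :: "real \<Rightarrow> nat \<Rightarrow> (int \<Rightarrow> int \<Rightarrow> real) \<Rightarrow> (real \<Rightarrow> real) \<Rightarrow> (real \<Rightarrow> real \<Rightarrow> real)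
    \<Rightarrow> (int \<Rightarrow> int \<Rightarrow> real) \<Rightarrow> int \<Rightarrow> int \<Rightarrow> real" where
  "xi L M W H' V rho j k =
     mesh L M * mesh L M * (\<Sum>i\<in>idx M. \<Sum>l\<in>idx M. W (j - i) (k - l) * rho i l)
     + H' (rho j k) + V (real_of_int j * mesh L M) (real_of_int k * mesh L M)"

definition uvel where
  "uvel L M W H' V rho j k = - (xi L M W H' V rho (j + 1) k - xi L M W H' V rho j k) / mesh L M"

definition vvel where
  "vvel L M W H' V rho j k = - (xi L M W H' V rho j (k + 1) - xi L M W H' V rho j k) / mesh L M"

definition rhoE :: "real \<Rightarrow> nat \<Rightarrow> (int \<Rightarrow> int \<Rightarrow> real) \<Rightarrow> (int \<Rightarrow> int \<Rightarrow> real) \<Rightarrow> int \<Rightarrow> int \<Rightarrow> real" where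
  "rhoE L M rho rx j k = rho j k + mesh L M / 2 * rx j k"
definition rhoW :: "real \<Rightarrow> nat \<Rightarrow> (int \<Rightarrow> int \<Rightarrow> real) \<Rightarrow> (int \<Rightarrow> int \<Rightarrow> real) \<Rightarrow> int \<Rightarrow> int \<Rightarrow> real" where
  "rhoW L M rho rx j k = rho j k - mesh L M / 2 * rx j k"
definition rhoN :: "real \<Rightarrow> nat \<Rightarrow> (int \<Rightarrow> int \<Rightarrow> real) \<Rightarrow> (int \<Rightarrow> int \<Rightarrow> real) \<Rightarrow> int \<Rightarrow> int \<Rightarrow> real" where
  "rhoN L M rho ry j k = rho j k + mesh L M / 2 * ry j k"
definition rhoS :: "real \<Rightarrow> nat \<Rightarrow> (int \<Rightarrow> int \<Rightarrow> real) \<Rightarrow> (int \<Rightarrow> int \<Rightarrow> real) \<Rightarrow> int \<Rightarrow> int \<Rightarrow> real" where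
  "rhoS L M rho ry j k = rho j k - mesh L M / 2 * ry j k"

definition Fx where
  "Fx L M W H' V rho rx j k =
     (if - int M \<le> j \<and> j \<le> int M - 1 then
        max (uvel L M W H' V rho j k) 0 * rhoE L M rho rx j k
        + min (uvel L M W H' V rho j k) 0 * rhoW L M rho rx (j + 1) k
      else 0)"

definition Fy where
  "Fy L M W H' V rho ry j k =
     (if - int M \<le> k \<and> k \<le> int M - 1 then
        max (vvel L M W H' V rho j k) 0 * rhoN L M rho ry j k
        + min (vvel L M W H' V rho j k) 0 * rhoS L M rho ry j (k + 1)
      else 0)"

definition rhs where
  "rhs L M W H' V rho rx ry j k =
     - (Fx L M W H' V rho rx j k - Fx L M W H' V rho rx (j - 1) k) / mesh L M
     - (Fy L M W H' V rho ry j k - Fy L M W H' V rho ry j (k - 1)) / mesh L M"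

definition Edisc where
  "Edisc L M W H V rho =
     mesh L M * mesh L M * (\<Sum>j\<in>idx M. \<Sum>k\<in>idx M.
        (1/2) * mesh L M * mesh L M * (\<Sum>i\<in>idx M. \<Sum>l\<in>idx M. W (j - i) (k - l) * rho i l * rho j k)
        + H (rho j k) + V (real_of_int j * mesh L M) (real_of_int k * mesh L M) * rho j k)"

definition Idisc where
  "Idisc L M W H' V rho rx ry =
     mesh L M * mesh L M * (\<Sum>j\<in>{- int M .. int M - 1}. \<Sum>k\<in>{- int M .. int M - 1}.
        ((uvel L M W H' V rho j k)\<^sup>2 + (vvel L M W H' V rho j k)\<^sup>2) *
        Min {rhoE L M rho rx j k, rhoW L M rho rx (j + 1) k, rhoN L M rho ry j k, rhoS L M rho ry j (k + 1)})"

end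

theory Submission
  imports Defs
begin

text \<open>By the symmetry of W the two terms obtained from differentiating the quadratic interaction
  energy coincide, so E' = \<Delta>x \<Delta>y \<Sigma> \<xi>_{j,k} \<rho>'_{j,k}. Inserting the scheme and summing by parts in
  each direction (the no-flux conditions kill the boundary terms) turns this into
  -\<Delta>x \<Delta>y \<Sigma> (F^x u + F^y v), since \<xi>_{j+1,k} - \<xi>_{j,k} = -\<Delta>x u. An upwind flux does work
  F^x u \<ge> u^2 min(\<rho>E, \<rho>W) \<ge> 0, which bounds that sum below by I_\<Delta>.\<close>

lemma sum_by_parts_int_interval:
  fixes F g :: "int \<Rightarrow> 'a::comm_ring"
  assumes "a \<le> b" and F_right: "F b = 0" and F_left: "F (a - 1) = 0"
  shows "(\<Sum>j\<in>{a..b}. g j * (F j - F (j - 1))) = - (\<Sum>j\<in>{a..b - 1}. F j * (g (j + 1) - g j))"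
proof -
  have right: "{a..b} = insert b {a..b - 1}" and left: "{a - 1..b - 1} = insert (a - 1) {a..b - 1}"
    using \<open>a \<le> b\<close> by auto
  have "(\<Sum>j\<in>{a..b}. g j * F j) = (\<Sum>j\<in>{a..b - 1}. g j * F j)"
    unfolding right using F_right by (subst sum.insert) auto
  moreover have "(\<Sum>j\<in>{a..b}. g j * F (j - 1)) = (\<Sum>j\<in>{a..b - 1}. g (j + 1) * F j)"
  proof -
    have "(\<Sum>j\<in>{a..b}. g j * F (j - 1)) = (\<Sum>j\<in>(\<lambda>j. j + 1) ` {a - 1..b - 1}. g j * F (j - 1))"
      by (rule sum.cong) (auto simp: image_iff intro!: bexI[where x="_ - 1"])
    also have "\<dots> = (\<Sum>j\<in>{a - 1..b - 1}. g (j + 1) * F j)"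
      by (subst sum.reindex) (auto simp: inj_on_def)
    also have "\<dots> = (\<Sum>j\<in>{a..b - 1}. g (j + 1) * F j)"
      unfolding left using F_left by (subst sum.insert) auto
    finally show ?thesis .
  qed
  ultimately show ?thesis
    by (simp add: right_diff_distrib sum_subtractf mult.commute)
qed

lemma sum4_swap_pairs:
  "(\<Sum>j\<in>A. \<Sum>k\<in>B. \<Sum>i\<in>A. \<Sum>l\<in>B. f j k i l) = (\<Sum>j\<in>A. \<Sum>k\<in>B. \<Sum>i\<in>A. \<Sum>l\<in>B. f i l j k)"
proof -
  have "(\<Sum>j\<in>A. \<Sum>k\<in>B. \<Sum>i\<in>A. \<Sum>l\<in>B. f j k i l) = (\<Sum>j\<in>A. \<Sum>i\<in>A. \<Sum>k\<in>B. \<Sum>l\<in>B. f j k i l)"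
    by (intro sum.cong refl sum.swap)
  also have "\<dots> = (\<Sum>i\<in>A. \<Sum>j\<in>A. \<Sum>l\<in>B. \<Sum>k\<in>B. f j k i l)"
    by (subst sum.swap) (intro sum.cong refl sum.swap)
  also have "\<dots> = (\<Sum>i\<in>A. \<Sum>l\<in>B. \<Sum>j\<in>A. \<Sum>k\<in>B. f j k i l)"
    by (intro sum.cong refl sum.swap)
  finally show ?thesis .
qed

lemma DERIV_compose_nonneg:
  assumes H: "\<And>r. r \<ge> 0 \<Longrightarrow> (H has_real_derivative H' r) (at r within {0..})"
    and f: "(f has_real_derivative f') (at t)"
    and S: "open S" "t \<in> S" "\<And>s. s \<in> S \<Longrightarrow> f s \<ge> 0"
  shows "((\<lambda>s. H (f s)) has_real_derivative H' (f t) * f') (at t)"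
proof -
  have "(H has_real_derivative H' (f t)) (at (f t) within f ` S)"
    by (rule DERIV_subset[OF H]) (use S in auto)
  from DERIV_image_chain[OF this has_field_derivative_at_within[OF f]]
  have "((\<lambda>s. H (f s)) has_real_derivative H' (f t) * f') (at t within S)"
    by (simp add: o_def)
  then show ?thesis
    using at_within_open[OF S(2,1)] by simp
qed

lemma upwind_flux_work_ge:
  fixes u a b m :: real
  assumes "m \<le> a" "m \<le> b"
  shows "u\<^sup>2 * m \<le> (max u 0 * a + min u 0 * b) * u"
proof (cases "u \<ge> 0")
  case True
  then have "(max u 0 * a + min u 0 * b) * u = u\<^sup>2 * a" by (simp add: power2_eq_square)
  then show ?thesis using assms(1) by (simp add: mult_left_mono)
next
  case False
  then have "(max u 0 * a + min u 0 * b) * u = u\<^sup>2 * b" by (simp add: power2_eq_square)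
  then show ?thesis using assms(2) by (simp add: mult_left_mono)
qed

lemma upwind_flux_work_nonneg:
  fixes u a b :: real
  assumes "0 \<le> a" "0 \<le> b"
  shows "0 \<le> (max u 0 * a + min u 0 * b) * u"
  using upwind_flux_work_ge[of "min a b" a b u] assms
  by (smt (verit) zero_le_power2 mult_nonneg_nonneg)

lemma interaction_sum_symmetric:
  fixes W :: "int \<Rightarrow> int \<Rightarrow> real"
  assumes W_sym: "\<And>p q. p \<in> {- 2 * int M .. 2 * int M} \<Longrightarrow> q \<in> {- 2 * int M .. 2 * int M}
                  \<Longrightarrow> W (- p) (- q) = W p q"
  shows "(\<Sum>j\<in>idx M. \<Sum>k\<in>idx M. \<Sum>i\<in>idx M. \<Sum>l\<in>idx M. W (j - i) (k - l) * x i l * y j k)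
       = (\<Sum>j\<in>idx M. \<Sum>k\<in>idx M. \<Sum>i\<in>idx M. \<Sum>l\<in>idx M. W (j - i) (k - l) * x j k * y i l)"
proof -
  have "W (i - j) (l - k) = W (j - i) (k - l)" if "j \<in> idx M" "k \<in> idx M" "i \<in> idx M" "l \<in> idx M" for j k i l
    using W_sym[of "j - i" "k - l"] that by (auto simp: idx_def)
  then show ?thesis
    by (subst sum4_swap_pairs) (intro sum.cong refl, simp)
qed

lemma Edisc_has_derivative:
  fixes rho :: "real \<Rightarrow> int \<Rightarrow> int \<Rightarrow> real" and W :: "int \<Rightarrow> int \<Rightarrow> real"
  assumes W_sym: "\<And>p q. p \<in> {- 2 * int M .. 2 * int M} \<Longrightarrow> q \<in> {- 2 * int M .. 2 * int M}
                  \<Longrightarrow> W (- p) (- q) = W p q"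
    and rho_deriv: "\<And>j k. j \<in> idx M \<Longrightarrow> k \<in> idx M \<Longrightarrow>
      ((\<lambda>s. rho s j k) has_real_derivative d j k) (at t)"
    and H_deriv: "\<And>j k. j \<in> idx M \<Longrightarrow> k \<in> idx M \<Longrightarrow>
      ((\<lambda>s. H (rho s j k)) has_real_derivative H' (rho t j k) * d j k) (at t)"
  shows "((\<lambda>s. Edisc L M W H V (rho s)) has_real_derivative
           mesh L M * mesh L M * (\<Sum>j\<in>idx M. \<Sum>k\<in>idx M. xi L M W H' V (rho t) j k * d j k)) (at t)"
proof -
  define h where "h = mesh L M"
  define A where "A = idx M"
  define r where "r = rho t"
  define conv where "conv j k = (\<Sum>i\<in>A. \<Sum>l\<in>A. W (j - i) (k - l) * r i l)" for j k
  define pot where "pot j k = H' (r j k) * d j k + V (real_of_int j * h) (real_of_int k * h) * d j k" for j k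
  have "((\<lambda>s. Edisc L M W H V (rho s)) has_real_derivative
     h * h * (\<Sum>j\<in>A. \<Sum>k\<in>A. 1/2 * h * h *
       (\<Sum>i\<in>A. \<Sum>l\<in>A. W (j - i) (k - l) * (d i l * r j k + r i l * d j k)) + pot j k)) (at t)"
    unfolding Edisc_def h_def[symmetric] A_def[symmetric] pot_def add.assoc
    by (intro DERIV_cmult DERIV_sum DERIV_add)
      (use rho_deriv H_deriv in \<open>auto intro!: derivative_eq_intros simp: A_def r_def algebra_simps\<close>)
  moreover have "(\<Sum>j\<in>A. \<Sum>k\<in>A. 1/2 * h * h *
       (\<Sum>i\<in>A. \<Sum>l\<in>A. W (j - i) (k - l) * (d i l * r j k + r i l * d j k)) + pot j k)
      = (\<Sum>j\<in>A. \<Sum>k\<in>A. xi L M W H' V r j k * d j k)"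
  proof -
    have "(\<Sum>j\<in>A. \<Sum>k\<in>A. \<Sum>i\<in>A. \<Sum>l\<in>A. W (j - i) (k - l) * (d i l * r j k + r i l * d j k))
        = 2 * (\<Sum>j\<in>A. \<Sum>k\<in>A. d j k * conv j k)"
      using interaction_sum_symmetric[of M W d r, OF W_sym]
      by (simp add: A_def conv_def distrib_left sum.distrib sum_distrib_left mult_ac)
    moreover have "xi L M W H' V r j k * d j k = h * h * (d j k * conv j k) + pot j k" for j k
      by (simp add: xi_def pot_def conv_def h_def A_def algebra_simps)
    ultimately show ?thesis
      by (simp only: sum.distrib sum_distrib_left[symmetric])
  qed
  ultimately show ?thesis
    by (simp add: A_def h_def r_def)
qed

definition flux_work :: "real \<Rightarrow> nat \<Rightarrow> (int \<Rightarrow> int \<Rightarrow> real) \<Rightarrow> (real \<Rightarrow> real) \<Rightarrow> (real \<Rightarrow> real \<Rightarrow> real)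
    \<Rightarrow> (int \<Rightarrow> int \<Rightarrow> real) \<Rightarrow> (int \<Rightarrow> int \<Rightarrow> real) \<Rightarrow> (int \<Rightarrow> int \<Rightarrow> real) \<Rightarrow> real" where
  "flux_work L M W H' V rho rx ry =
     (\<Sum>k\<in>idx M. \<Sum>j\<in>{- int M .. int M - 1}. Fx L M W H' V rho rx j k * uvel L M W H' V rho j k)
     + (\<Sum>j\<in>idx M. \<Sum>k\<in>{- int M .. int M - 1}. Fy L M W H' V rho ry j k * vvel L M W H' V rho j k)"

lemma sum_xi_mult_rhs:
  assumes h: "mesh L M \<noteq> 0"
  shows "(\<Sum>j\<in>idx M. \<Sum>k\<in>idx M. xi L M W H' V rho j k * rhs L M W H' V rho rx ry j k)
       = - flux_work L M W H' V rho rx ry"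
proof -
  define h where "h = mesh L M"
  define \<xi> where "\<xi> = xi L M W H' V rho"
  define fx where "fx = Fx L M W H' V rho rx"
  define fy where "fy = Fy L M W H' V rho ry"
  define u where "u = uvel L M W H' V rho"
  define v where "v = vvel L M W H' V rho"
  define J where "J = {- int M .. int M - 1}"
  have x_row: "(\<Sum>j\<in>idx M. \<xi> j k * (fx j k - fx (j - 1) k)) = h * (\<Sum>j\<in>J. fx j k * u j k)" for k
  proof -
    have "(\<Sum>j\<in>idx M. \<xi> j k * (fx j k - fx (j - 1) k)) = - (\<Sum>j\<in>J. fx j k * (\<xi> (j + 1) k - \<xi> j k))"
      unfolding idx_def J_def by (rule sum_by_parts_int_interval) (simp_all add: fx_def Fx_def)
    also have "\<dots> = h * (\<Sum>j\<in>J. fx j k * u j k)"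
    proof -
      have "fx j k * (\<xi> (j + 1) k - \<xi> j k) = - (h * (fx j k * u j k))" for j
        using h by (simp add: u_def uvel_def h_def \<xi>_def field_simps)
      then show ?thesis by (simp add: sum_distrib_left sum_negf)
    qed
    finally show ?thesis .
  qed
  have y_column: "(\<Sum>k\<in>idx M. \<xi> j k * (fy j k - fy j (k - 1))) = h * (\<Sum>k\<in>J. fy j k * v j k)" for j
  proof -
    have "(\<Sum>k\<in>idx M. \<xi> j k * (fy j k - fy j (k - 1))) = - (\<Sum>k\<in>J. fy j k * (\<xi> j (k + 1) - \<xi> j k))"
      unfolding idx_def J_def by (rule sum_by_parts_int_interval) (simp_all add: fy_def Fy_def)
    also have "\<dots> = h * (\<Sum>k\<in>J. fy j k * v j k)"
    proof -
      have "fy j k * (\<xi> j (k + 1) - \<xi> j k) = - (h * (fy j k * v j k))" for k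
        using h by (simp add: v_def vvel_def h_def \<xi>_def field_simps)
      then show ?thesis by (simp add: sum_distrib_left sum_negf)
    qed
    finally show ?thesis .
  qed
  have "(\<Sum>j\<in>idx M. \<Sum>k\<in>idx M. \<xi> j k * rhs L M W H' V rho rx ry j k)
      = - (\<Sum>j\<in>idx M. \<Sum>k\<in>idx M. \<xi> j k * (fx j k - fx (j - 1) k)) / h
        - (\<Sum>j\<in>idx M. \<Sum>k\<in>idx M. \<xi> j k * (fy j k - fy j (k - 1))) / h"
    by (simp add: rhs_def fx_def fy_def h_def sum_subtractf sum_divide_distrib diff_divide_distrib
        right_diff_distrib)
  also have "\<dots> = - (\<Sum>k\<in>idx M. \<Sum>j\<in>J. fx j k * u j k) - (\<Sum>j\<in>idx M. \<Sum>k\<in>J. fy j k * v j k)"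
    using h by (subst sum.swap) (simp add: x_row y_column h_def sum_distrib_left[symmetric])
  finally show ?thesis
    by (simp add: flux_work_def \<xi>_def fx_def fy_def u_def v_def J_def)
qed

lemma finite_idx [simp]: "finite (idx M)"
  by (simp add: idx_def)

lemma Idisc_le_flux_work:
  assumes E_nonneg: "\<And>j k. j \<in> idx M \<Longrightarrow> k \<in> idx M \<Longrightarrow> rhoE L M rho rx j k \<ge> 0"
    and W_nonneg: "\<And>j k. j \<in> idx M \<Longrightarrow> k \<in> idx M \<Longrightarrow> rhoW L M rho rx j k \<ge> 0"
    and N_nonneg: "\<And>j k. j \<in> idx M \<Longrightarrow> k \<in> idx M \<Longrightarrow> rhoN L M rho ry j k \<ge> 0"
    and S_nonneg: "\<And>j k. j \<in> idx M \<Longrightarrow> k \<in> idx M \<Longrightarrow> rhoS L M rho ry j k \<ge> 0"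
  shows "Idisc L M W H' V rho rx ry \<le> mesh L M * mesh L M * flux_work L M W H' V rho rx ry"
proof -
  define J where "J = {- int M .. int M - 1}"
  define fx where "fx = Fx L M W H' V rho rx"
  define fy where "fy = Fy L M W H' V rho ry"
  define u where "u = uvel L M W H' V rho"
  define v where "v = vvel L M W H' V rho"
  define m where "m j k = Min {rhoE L M rho rx j k, rhoW L M rho rx (j + 1) k,
     rhoN L M rho ry j k, rhoS L M rho ry j (k + 1)}" for j k
  have J_idx: "j \<in> idx M" "j + 1 \<in> idx M" if "j \<in> J" for j
    using that by (auto simp: J_def idx_def)
  have J_sub: "J \<subseteq> idx M"
    by (auto simp: J_def idx_def)
  have fx_J: "fx j k = max (u j k) 0 * rhoE L M rho rx j k + min (u j k) 0 * rhoW L M rho rx (j + 1) k"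
    if "j \<in> J" for j k
    using that by (simp add: fx_def Fx_def u_def J_def)
  have fy_J: "fy j k = max (v j k) 0 * rhoN L M rho ry j k + min (v j k) 0 * rhoS L M rho ry j (k + 1)"
    if "k \<in> J" for j k
    using that by (simp add: fy_def Fy_def v_def J_def)
  have x_work: "(\<Sum>j\<in>J. \<Sum>k\<in>J. (u j k)\<^sup>2 * m j k) \<le> (\<Sum>k\<in>idx M. \<Sum>j\<in>J. fx j k * u j k)"
  proof -
    have "(\<Sum>j\<in>J. \<Sum>k\<in>J. (u j k)\<^sup>2 * m j k) \<le> (\<Sum>j\<in>J. \<Sum>k\<in>J. fx j k * u j k)"
      by (intro sum_mono) (simp add: fx_J upwind_flux_work_ge m_def)
    \<comment> \<open>the interfaces of the top row, which I_\<Delta> omits, contribute nonnegative work\<close>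
    also have "\<dots> \<le> (\<Sum>j\<in>J. \<Sum>k\<in>idx M. fx j k * u j k)"
      by (intro sum_mono sum_mono2 J_sub)
        (auto simp: fx_J J_idx intro!: upwind_flux_work_nonneg E_nonneg W_nonneg)
    also have "\<dots> = (\<Sum>k\<in>idx M. \<Sum>j\<in>J. fx j k * u j k)"
      by (rule sum.swap)
    finally show ?thesis .
  qed
  have y_work: "(\<Sum>j\<in>J. \<Sum>k\<in>J. (v j k)\<^sup>2 * m j k) \<le> (\<Sum>j\<in>idx M. \<Sum>k\<in>J. fy j k * v j k)"
  proof -
    have "(\<Sum>j\<in>J. \<Sum>k\<in>J. (v j k)\<^sup>2 * m j k) \<le> (\<Sum>j\<in>J. \<Sum>k\<in>J. fy j k * v j k)"
      by (intro sum_mono) (simp add: fy_J upwind_flux_work_ge m_def)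
    also have "\<dots> \<le> (\<Sum>j\<in>idx M. \<Sum>k\<in>J. fy j k * v j k)"
      by (intro sum_mono2 J_sub sum_nonneg)
        (auto simp: fy_J J_idx intro!: upwind_flux_work_nonneg N_nonneg S_nonneg)
    finally show ?thesis .
  qed
  have "Idisc L M W H' V rho rx ry
      = mesh L M * mesh L M * ((\<Sum>j\<in>J. \<Sum>k\<in>J. (u j k)\<^sup>2 * m j k) + (\<Sum>j\<in>J. \<Sum>k\<in>J. (v j k)\<^sup>2 * m j k))"
    unfolding Idisc_def J_def u_def v_def m_def
    by (simp only: sum.distrib[symmetric] distrib_right)
  also have "\<dots> \<le> mesh L M * mesh L M *
      ((\<Sum>k\<in>idx M. \<Sum>j\<in>J. fx j k * u j k) + (\<Sum>j\<in>idx M. \<Sum>k\<in>J. fy j k * v j k))"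
    using x_work y_work by (intro mult_left_mono) auto
  finally show ?thesis
    by (simp add: flux_work_def J_def fx_def fy_def u_def v_def)
qed

theorem theorem2p4:
  fixes L :: real and M :: nat
    and H H' :: "real \<Rightarrow> real" and V :: "real \<Rightarrow> real \<Rightarrow> real" and W :: "int \<Rightarrow> int \<Rightarrow> real"
    and rho rx ry :: "real \<Rightarrow> int \<Rightarrow> int \<Rightarrow> real"
  assumes L_pos: "L > 0" and M_ge: "M \<ge> 1"
    and H_deriv: "\<And>r. r \<ge> 0 \<Longrightarrow> (H has_real_derivative H' r) (at r within {0..})"
    and H'_cont: "continuous_on {0..} H'"
    and W_sym: "\<And>p q. p \<in> {- 2 * int M .. 2 * int M} \<Longrightarrow> q \<in> {- 2 * int M .. 2 * int M}
                  \<Longrightarrow> W (- p) (- q) = W p q"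
    and rho_nonneg: "\<And>t j k. t > 0 \<Longrightarrow> j \<in> idx M \<Longrightarrow> k \<in> idx M \<Longrightarrow> rho t j k \<ge> 0"
    and E_nonneg: "\<And>t j k. t > 0 \<Longrightarrow> j \<in> idx M \<Longrightarrow> k \<in> idx M \<Longrightarrow> rhoE L M (rho t) (rx t) j k \<ge> 0"
    and W_nonneg: "\<And>t j k. t > 0 \<Longrightarrow> j \<in> idx M \<Longrightarrow> k \<in> idx M \<Longrightarrow> rhoW L M (rho t) (rx t) j k \<ge> 0"
    and N_nonneg: "\<And>t j k. t > 0 \<Longrightarrow> j \<in> idx M \<Longrightarrow> k \<in> idx M \<Longrightarrow> rhoN L M (rho t) (ry t) j k \<ge> 0"
    and S_nonneg: "\<And>t j k. t > 0 \<Longrightarrow> j \<in> idx M \<Longrightarrow> k \<in> idx M \<Longrightarrow> rhoS L M (rho t) (ry t) j k \<ge> 0"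
    and ode: "\<And>t j k. t > 0 \<Longrightarrow> j \<in> idx M \<Longrightarrow> k \<in> idx M \<Longrightarrow>
               ((\<lambda>s. rho s j k) has_real_derivative rhs L M W H' V (rho t) (rx t) (ry t) j k) (at t)"
    and t_pos: "t > 0"
  shows "\<exists>D. ((\<lambda>s. Edisc L M W H V (rho s)) has_real_derivative D) (at t)
             \<and> D \<le> - Idisc L M W H' V (rho t) (rx t) (ry t)"
proof -
  have mesh_nz: "mesh L M \<noteq> 0"
    using L_pos M_ge by (simp add: mesh_def)
  have H_chain: "((\<lambda>s. H (rho s j k)) has_real_derivative
      H' (rho t j k) * rhs L M W H' V (rho t) (rx t) (ry t) j k) (at t)"
    if "j \<in> idx M" "k \<in> idx M" for j k
    by (rule DERIV_compose_nonneg[OF H_deriv ode[OF t_pos that], where S="{0<..}"])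
      (use that t_pos in \<open>auto intro: rho_nonneg\<close>)
  have "((\<lambda>s. Edisc L M W H V (rho s)) has_real_derivative mesh L M * mesh L M *
      (\<Sum>j\<in>idx M. \<Sum>k\<in>idx M. xi L M W H' V (rho t) j k * rhs L M W H' V (rho t) (rx t) (ry t) j k)) (at t)"
    using W_sym ode[OF t_pos] H_chain by (rule Edisc_has_derivative)
  moreover have "mesh L M * mesh L M *
      (\<Sum>j\<in>idx M. \<Sum>k\<in>idx M. xi L M W H' V (rho t) j k * rhs L M W H' V (rho t) (rx t) (ry t) j k)
      \<le> - Idisc L M W H' V (rho t) (rx t) (ry t)"
    using Idisc_le_flux_work[of M L "rho t" "rx t" "ry t" W H' V] t_pos E_nonneg W_nonneg N_nonneg S_nonneg
    by (simp add: sum_xi_mult_rhs[OF mesh_nz])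
  ultimately show ?thesis
    by blast
qed

end
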